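(* Let $k$ be a positive integer and let $G$ be a $2k$-connected $(P_2\cup kP_1)$-free graph. Let $u,v$ be distinct vertices of $G$ and let $P$ be a longest $(u,v)$-path in $G$. Then every component of $G-V(P)$ consists of a single vertex; equivalently, $V(G)\setminus V(P)$ is an independent set.
   Context: All graphs are finite and simple. For a graph $H$, a graph $G$ is $H$-free if $G$ contains no induced subgraph isomorphic to $H$; $P_2\cup kP_1$ is the disjoint union of an edge and $k$ isolated vertices. A $(u,v)$-path is a path with endpoints $u$ and $v$. *)

theory Defs
  imports Main
begin

definition graph :: "'a set \<Rightarrow> ('a \<Rightarrow> 'a \<Rightarrow> bool) \<Rightarrow> bool" where
  "graph V E \<longleftrightarrow> finite V \<and> (\<forall>x y. E x y \<longrightarrow> x \<in> V \<and> y \<in> V)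
     \<and> (\<forall>x y. E x y \<longrightarrow> E y x) \<and> (\<forall>x. \<not> E x x)"

definition path_in :: "'a set \<Rightarrow> ('a \<Rightarrow> 'a \<Rightarrow> bool) \<Rightarrow> 'a list \<Rightarrow> bool" where
  "path_in W E xs \<longleftrightarrow> xs \<noteq> [] \<and> distinct xs \<and> set xs \<subseteq> W
     \<and> (\<forall>i. Suc i < length xs \<longrightarrow> E (xs ! i) (xs ! Suc i))"

definition uv_path :: "'a set \<Rightarrow> ('a \<Rightarrow> 'a \<Rightarrow> bool) \<Rightarrow> 'a \<Rightarrow> 'a \<Rightarrow> 'a list \<Rightarrow> bool" where
  "uv_path V E u v xs \<longleftrightarrow> path_in V E xs \<and> hd xs = u \<and> last xs = v"

definition longest_uv_path :: "'a set \<Rightarrow> ('a \<Rightarrow> 'a \<Rightarrow> bool) \<Rightarrow> 'a \<Rightarrow> 'a \<Rightarrow> 'a list \<Rightarrow> bool" where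
  "longest_uv_path V E u v xs \<longleftrightarrow> uv_path V E u v xs
     \<and> (\<forall>ys. uv_path V E u v ys \<longrightarrow> length ys \<le> length xs)"

definition connected_on :: "'a set \<Rightarrow> ('a \<Rightarrow> 'a \<Rightarrow> bool) \<Rightarrow> bool" where
  "connected_on W E \<longleftrightarrow> W \<noteq> {} \<and>
     (\<forall>x\<in>W. \<forall>y\<in>W. \<exists>xs. path_in W E xs \<and> hd xs = x \<and> last xs = y)"

definition k_connected :: "'a set \<Rightarrow> ('a \<Rightarrow> 'a \<Rightarrow> bool) \<Rightarrow> nat \<Rightarrow> bool" where
  "k_connected V E k \<longleftrightarrow> card V > k \<and>
     (\<forall>S. S \<subseteq> V \<and> card S < k \<longrightarrow> connected_on (V - S) E)"

text \<open>(P_2 \<union> kP_1)-free: no induced subgraph consisting of an edge ab plus k further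
  vertices that are pairwise nonadjacent and nonadjacent to a and b.\<close>
definition P2_kP1_free :: "'a set \<Rightarrow> ('a \<Rightarrow> 'a \<Rightarrow> bool) \<Rightarrow> nat \<Rightarrow> bool" where
  "P2_kP1_free V E k \<longleftrightarrow> \<not> (\<exists>a b S. a \<in> V \<and> b \<in> V \<and> E a b \<and> S \<subseteq> V - {a, b}
     \<and> card S = k \<and> (\<forall>x\<in>S. \<forall>y\<in>S. \<not> E x y) \<and> (\<forall>x\<in>S. \<not> E x a \<and> \<not> E x b))"

end

theory Submission
  imports Defs
begin

text \<open>Suppose an edge xy avoids a longest (u,v)-path P, and let H be the component of x in G - V(P).
  If two consecutive vertices of P both had neighbours in H, a path through H could be inserted
  between them; if the successors of two attachment vertices were adjacent, P could be rerouted
  through H and back along the reversed segment between them. Either way P would get longer. So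
  attachment vertices are never consecutive, and their successors on P are pairwise nonadjacent and
  have no neighbour in H. The attachment vertices separate H from the rest of P, hence there are at
  least 2k of them, and k of their successors together with the edge xy induce P_2 \<union> kP_1.\<close>

fun walk :: "'a set \<Rightarrow> ('a \<Rightarrow> 'a \<Rightarrow> bool) \<Rightarrow> 'a list \<Rightarrow> bool" where
  "walk W E [] = False"
| "walk W E [x] = (x \<in> W)"
| "walk W E (x # y # xs) = (x \<in> W \<and> E x y \<and> walk W E (y # xs))"

lemma walk_iff:
  "walk W E xs \<longleftrightarrow> xs \<noteq> [] \<and> set xs \<subseteq> W \<and> (\<forall>i. Suc i < length xs \<longrightarrow> E (xs ! i) (xs ! Suc i))"
proof (induction W E xs rule: walk.induct)
  case (3 W E x y xs)
  have "(\<forall>i. Suc i < length (x # y # xs) \<longrightarrow> E ((x # y # xs) ! i) ((x # y # xs) ! Suc i))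
      \<longleftrightarrow> E x y \<and> (\<forall>i. Suc i < length (y # xs) \<longrightarrow> E ((y # xs) ! i) ((y # xs) ! Suc i))"
    (is "?L \<longleftrightarrow> ?R")
  proof
    assume ?L
    then show ?R by (metis Suc_less_eq length_Cons nth_Cons_0 nth_Cons_Suc zero_less_Suc)
  next
    assume r: ?R
    show ?L
    proof (intro allI impI)
      fix i assume "Suc i < length (x # y # xs)"
      then show "E ((x # y # xs) ! i) ((x # y # xs) ! Suc i)" using r by (cases i) auto
    qed
  qed
  then show ?case using "3.IH" by auto
qed auto

lemma path_in_iff_walk: "path_in W E xs \<longleftrightarrow> walk W E xs \<and> distinct xs"
  unfolding path_in_def walk_iff by auto

lemma walk_not_Nil: "walk W E xs \<Longrightarrow> xs \<noteq> []"
  by (cases xs) auto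

lemma walk_append:
  "xs \<noteq> [] \<Longrightarrow> ys \<noteq> [] \<Longrightarrow>
   walk W E (xs @ ys) \<longleftrightarrow> walk W E xs \<and> walk W E ys \<and> E (last xs) (hd ys)"
proof (induction xs)
  case (Cons a xs)
  then show ?case by (cases xs; cases ys) auto
qed simp

lemma walk_append_overlap:
  "walk W E (xs @ y # ys) \<longleftrightarrow> walk W E (xs @ [y]) \<and> walk W E (y # ys)"
proof (induction xs)
  case Nil
  then show ?case by (cases ys) auto
next
  case (Cons a xs)
  then show ?case by (cases xs) auto
qed

lemma walk_rev:
  assumes "symp E" and "walk W E xs"
  shows "walk W E (rev xs)"
  using assms
proof (induction W E xs rule: walk.induct)
  case (3 W E x y xs)
  then have "walk W E (rev (y # xs))" by simp
  moreover have "x \<in> W" "E y x" using "3.prems" by (auto dest: sympD)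
  ultimately show ?case
    using walk_append[of "rev (y # xs)" "[x]" W E] by (simp add: last_rev)
qed simp_all

lemma walk_shortcut_to_path:
  "walk W E xs \<Longrightarrow> \<exists>ys. path_in W E ys \<and> hd ys = hd xs \<and> last ys = last xs"
proof (induction "length xs" arbitrary: xs rule: less_induct)
  case less
  show ?case
  proof (cases "distinct xs")
    case True
    then show ?thesis using less.prems by (auto simp: path_in_iff_walk)
  next
    case False
    then obtain as bs cs c where xs: "xs = as @ [c] @ bs @ [c] @ cs"
      using not_distinct_decomp by blast
    have "walk W E (as @ [c])" "walk W E ((c # bs) @ c # cs)"
      using less.prems walk_append_overlap[of W E as c "(bs @ [c]) @ cs"] xs by auto
    then have shortcut: "walk W E (as @ c # cs)"
      using walk_append_overlap by metis
    have "hd (as @ c # cs) = hd xs" "last (as @ c # cs) = last xs"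
      using xs by (cases as; simp)+
    moreover have "length (as @ c # cs) < length xs" using xs by simp
    ultimately show ?thesis using less.hyps shortcut by metis
  qed
qed

lemma path_in_append:
  assumes "xs \<noteq> []" and "ys \<noteq> []"
  shows "path_in W E (xs @ ys) \<longleftrightarrow>
    path_in W E xs \<and> path_in W E ys \<and> set xs \<inter> set ys = {} \<and> E (last xs) (hd ys)"
  using walk_append[OF assms] by (auto simp: path_in_iff_walk)

lemma path_in_rev: "symp E \<Longrightarrow> path_in W E xs \<Longrightarrow> path_in W E (rev xs)"
  by (simp add: path_in_iff_walk walk_rev)

lemma path_in_Diff: "path_in (V - X) E xs \<Longrightarrow> path_in V E xs \<and> set xs \<inter> X = {}"
  unfolding path_in_def by blast

lemma list_leaves_set:
  "xs \<noteq> [] \<Longrightarrow> hd xs \<in> A \<Longrightarrow> last xs \<notin> A \<Longrightarrow>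
   \<exists>t. Suc t < length xs \<and> xs ! t \<in> A \<and> xs ! Suc t \<notin> A"
proof (induction xs)
  case (Cons a xs)
  show ?case
  proof (cases "xs \<noteq> [] \<and> hd xs \<in> A")
    case True
    then obtain t where "Suc t < length xs" "xs ! t \<in> A" "xs ! Suc t \<notin> A"
      using Cons by auto
    then show ?thesis by (intro exI[of _ "Suc t"]) auto
  next
    case False
    then show ?thesis using Cons by (intro exI[of _ 0]) (cases xs; auto)
  qed
qed simp

lemma path_in_insert:
  assumes "path_in V E (A @ C)" and "path_in V E q" and "set q \<inter> set (A @ C) = {}"
    and "A \<noteq> []" and "C \<noteq> []"
    and "E (last A) (hd q)" and "E (last q) (hd C)"
  shows "path_in V E (A @ q @ C)"
proof -
  have q: "q \<noteq> []" using assms(2) by (simp add: path_in_def)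
  have A: "path_in V E A" and C: "path_in V E C" and AC: "set A \<inter> set C = {}"
    using assms(1) unfolding path_in_append[OF assms(4,5)] by auto
  have "path_in V E (q @ C)"
    unfolding path_in_append[OF q assms(5)] using assms(2,3,7) C by auto
  moreover have "q @ C \<noteq> []" using q by simp
  ultimately show ?thesis
    using path_in_append[OF assms(4) \<open>q @ C \<noteq> []\<close>] q A AC assms(3,6) by auto
qed

lemma path_in_reroute:
  assumes "symp E"
    and "path_in V E (A @ B @ C)" and "path_in V E q" and "set q \<inter> set (A @ B @ C) = {}"
    and "A \<noteq> []" and "B \<noteq> []" and "C \<noteq> []"
    and "E (last A) (hd q)" and "E (last q) (last B)" and "E (hd B) (hd C)"
  shows "path_in V E (A @ q @ rev B @ C)"
proof -
  have q: "q \<noteq> []" using assms(3) by (simp add: path_in_def)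
  have BC_ne: "B @ C \<noteq> []" using assms(6) by simp
  have A: "path_in V E A" and BC: "path_in V E (B @ C)"
    and A_BC: "set A \<inter> set (B @ C) = {}"
    using assms(2) unfolding path_in_append[OF assms(5) BC_ne] by auto
  have B: "path_in V E B" and C: "path_in V E C" and B_C: "set B \<inter> set C = {}"
    using BC unfolding path_in_append[OF assms(6,7)] by auto
  have "rev B \<noteq> []" using assms(6) by simp
  then have "path_in V E (rev B @ C)"
    unfolding path_in_append[OF \<open>rev B \<noteq> []\<close> assms(7)] using path_in_rev[OF assms(1) B] C B_C assms(6,10)
    by (simp add: last_rev)
  moreover have "rev B @ C \<noteq> []" using assms(7) by simp
  ultimately have "path_in V E (q @ rev B @ C)"
    unfolding path_in_append[OF q \<open>rev B @ C \<noteq> []\<close>] using assms(3,4,6,9) by (auto simp: hd_rev)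
  moreover have "q @ rev B @ C \<noteq> []" using q by simp
  ultimately show ?thesis
    unfolding path_in_append[OF assms(5) \<open>q @ rev B @ C \<noteq> []\<close>] using A A_BC q assms(4,8) by auto
qed

definition component :: "'a set \<Rightarrow> ('a \<Rightarrow> 'a \<Rightarrow> bool) \<Rightarrow> 'a \<Rightarrow> 'a set" where
  "component W E x = {z. \<exists>ws. walk W E ws \<and> hd ws = x \<and> last ws = z}"

lemma component_subset: "component W E x \<subseteq> W"
proof
  fix z assume "z \<in> component W E x"
  then obtain ws where "walk W E ws" "last ws = z" unfolding component_def by blast
  then show "z \<in> W" unfolding walk_iff using last_in_set by blast
qed

lemma self_in_component: "x \<in> W \<Longrightarrow> x \<in> component W E x"
  unfolding component_def by (intro CollectI exI[of _ "[x]"]) simp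

lemma component_closed:
  assumes "a \<in> component W E x" and "z \<in> W" and "E a z"
  shows "z \<in> component W E x"
proof -
  obtain ws where ws: "walk W E ws" "hd ws = x" "last ws = a"
    using assms(1) unfolding component_def by blast
  moreover have "ws \<noteq> []" using ws(1) by (rule walk_not_Nil)
  ultimately have "walk W E (ws @ [z])" "hd (ws @ [z]) = x"
    using assms walk_append[of ws "[z]" W E] by auto
  then show ?thesis unfolding component_def by fastforce
qed

lemma component_path:
  assumes "symp E" and "a \<in> component W E x" and "b \<in> component W E x"
  shows "\<exists>q. path_in W E q \<and> hd q = a \<and> last q = b"
proof -
  obtain wa where wa: "walk W E wa" "hd wa = x" "last wa = a"
    using assms(2) unfolding component_def by blast
  obtain wb where wb: "walk W E wb" "hd wb = x" "last wb = b"
    using assms(3) unfolding component_def by blast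
  obtain ta where ta: "wa = x # ta" using wa walk_not_Nil by (cases wa) auto
  obtain tb where tb: "wb = x # tb" using wb walk_not_Nil by (cases wb) auto
  have "walk W E (rev ta @ [x])" using walk_rev[OF assms(1) wa(1)] ta by simp
  then have "walk W E (rev ta @ x # tb)"
    using walk_append_overlap[of W E "rev ta" x tb] wb(1) tb by simp
  then obtain q where "path_in W E q" "hd q = hd (rev ta @ x # tb)" "last q = last (rev ta @ x # tb)"
    using walk_shortcut_to_path by blast
  moreover have "hd (rev ta @ x # tb) = a" using wa ta by (cases ta rule: rev_cases) auto
  moreover have "last (rev ta @ x # tb) = b" using wb tb by simp
  ultimately show ?thesis by auto
qed

lemma longest_uv_path_maximal:
  assumes "longest_uv_path V E u v P" and "path_in V E R" and "hd R = hd P" and "last R = last P"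
  shows "length R \<le> length P"
  using assms unfolding longest_uv_path_def uv_path_def by auto

lemma longest_uv_path_no_insertion:
  assumes "longest_uv_path V E u v P" and "path_in V E q" and "set q \<inter> set P = {}"
    and "Suc i < length P"
  shows "\<not> (E (P ! i) (hd q) \<and> E (last q) (P ! Suc i))"
proof
  assume edges: "E (P ! i) (hd q) \<and> E (last q) (P ! Suc i)"
  let ?A = "take (Suc i) P" and ?C = "drop (Suc i) P"
  have "P \<noteq> []" using assms(4) by auto
  have "path_in V E (?A @ ?C)"
    using assms(1) unfolding longest_uv_path_def uv_path_def by simp
  moreover have "last ?A = P ! i" "hd ?C = P ! Suc i"
    using assms(4) by (simp_all add: take_Suc_conv_app_nth hd_drop_conv_nth)
  ultimately have R: "path_in V E (?A @ q @ ?C)"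
    using path_in_insert[of V E ?A ?C q] assms(2-4) edges \<open>P \<noteq> []\<close> by simp
  have "q \<noteq> []" using assms(2) by (simp add: path_in_def)
  then have "length P < length (?A @ q @ ?C)" using assms(4) by simp
  moreover have "hd (?A @ q @ ?C) = hd P" "last (?A @ q @ ?C) = last P"
    using assms(4) \<open>P \<noteq> []\<close> by (simp_all add: hd_append last_append)
  ultimately show False using longest_uv_path_maximal[OF assms(1) R] by simp
qed

lemma longest_uv_path_no_rerouting:
  assumes "symp E" and "longest_uv_path V E u v P" and "path_in V E q" and "set q \<inter> set P = {}"
    and "i < j" and "Suc j < length P"
  shows "\<not> (E (P ! i) (hd q) \<and> E (last q) (P ! j) \<and> E (P ! Suc i) (P ! Suc j))"
proof
  assume edges: "E (P ! i) (hd q) \<and> E (last q) (P ! j) \<and> E (P ! Suc i) (P ! Suc j)"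
  let ?A = "take (Suc i) P" and ?B = "drop (Suc i) (take (Suc j) P)" and ?C = "drop (Suc j) P"
  have "P \<noteq> []" using assms(6) by auto
  have "take (Suc i) (take (Suc j) P) = ?A" using assms(5) by (simp add: min_def)
  then have "take (Suc j) P = ?A @ ?B" by (metis append_take_drop_id)
  then have dec: "P = ?A @ ?B @ ?C" by (metis append.assoc append_take_drop_id)
  have "hd ?B = P ! Suc i"
    using assms(5,6) by (simp add: hd_drop_conv_nth)
  moreover have "last ?A = P ! i" "last ?B = P ! j" "hd ?C = P ! Suc j"
    using assms(5,6) by (simp_all add: take_Suc_conv_app_nth hd_drop_conv_nth)
  ultimately have "E (last ?A) (hd q)" "E (last q) (last ?B)" "E (hd ?B) (hd ?C)"
    using edges by simp_all
  moreover have "path_in V E (?A @ ?B @ ?C)" "set q \<inter> set (?A @ ?B @ ?C) = {}"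
    using assms(2,4) unfolding longest_uv_path_def uv_path_def by (simp_all only: dec[symmetric])
  moreover have "?A \<noteq> []" "?B \<noteq> []" "?C \<noteq> []" using assms(5,6) by auto
  ultimately have R: "path_in V E (?A @ q @ rev ?B @ ?C)"
    using path_in_reroute[OF assms(1) _ assms(3)] by blast
  have "q \<noteq> []" using assms(3) by (simp add: path_in_def)
  then have "length P < length (?A @ q @ rev ?B @ ?C)" using assms(5,6) by simp
  moreover have "hd (?A @ q @ rev ?B @ ?C) = hd P" "last (?A @ q @ rev ?B @ ?C) = last P"
    using assms(5,6) \<open>P \<noteq> []\<close> by (simp_all add: hd_append last_append)
  ultimately show False using longest_uv_path_maximal[OF assms(2) R] by simp
qed

lemma k_connected_component_neighbours:
  assumes "k_connected V E c" and "W \<subseteq> V" and "x \<in> W" and "z \<in> V - W"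
    and "\<forall>a \<in> component W E x. \<not> E a z"
  shows "c \<le> card {y \<in> V - W. \<exists>a \<in> component W E x. E a y}"
proof (rule ccontr)
  let ?H = "component W E x" and ?S = "{y \<in> V - W. \<exists>a \<in> component W E x. E a y}"
  assume "\<not> c \<le> card ?S"
  then have "connected_on (V - ?S) E" using assms(1) unfolding k_connected_def by auto
  moreover have "x \<in> V - ?S" "z \<in> V - ?S" using assms(2-5) by auto
  ultimately obtain q where q: "path_in (V - ?S) E q" "hd q = x" "last q = z"
    unfolding connected_on_def by blast
  have "x \<in> ?H" using assms(3) by (rule self_in_component)
  moreover have "z \<notin> ?H" using assms(4) component_subset[of W E x] by blast
  moreover have "q \<noteq> []" using q(1) by (simp add: path_in_def)
  ultimately obtain t where t: "Suc t < length q" "q ! t \<in> ?H" "q ! Suc t \<notin> ?H"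
    using list_leaves_set[of q ?H] q(2,3) by blast
  have step: "E (q ! t) (q ! Suc t)" using q(1) t(1) unfolding path_in_def by blast
  have "q ! Suc t \<in> set q" using t(1) by (rule nth_mem)
  then have "q ! Suc t \<in> V" "q ! Suc t \<notin> ?S" using q(1) unfolding path_in_def by blast+
  then show False
    using component_closed[OF t(2) _ step] t(2,3) step by blast
qed

definition attachments :: "('a \<Rightarrow> 'a \<Rightarrow> bool) \<Rightarrow> 'a list \<Rightarrow> 'a set \<Rightarrow> nat set" where
  "attachments E P H = {i. i < length P \<and> (\<exists>a\<in>H. E (P ! i) a)}"

lemma component_bridge:
  assumes "symp E" and "i \<in> attachments E P (component (V - set P) E x)"
    and "j \<in> attachments E P (component (V - set P) E x)"
  obtains q where "path_in V E q" "set q \<inter> set P = {}" "E (P ! i) (hd q)" "E (last q) (P ! j)"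
proof -
  obtain a b where "a \<in> component (V - set P) E x" "E (P ! i) a"
    and "b \<in> component (V - set P) E x" "E (P ! j) b"
    using assms(2,3) unfolding attachments_def by blast
  moreover obtain q where "path_in (V - set P) E q" "hd q = a" "last q = b"
    using component_path[OF assms(1)] calculation by blast
  moreover have "E b (P ! j)" using assms(1) \<open>E (P ! j) b\<close> by (rule sympD)
  ultimately show thesis using that path_in_Diff by blast
qed

lemma attachments_not_consecutive:
  assumes "symp E" and "longest_uv_path V E u v P"
    and "i \<in> attachments E P (component (V - set P) E x)"
  shows "Suc i \<notin> attachments E P (component (V - set P) E x)"
proof
  assume succ: "Suc i \<in> attachments E P (component (V - set P) E x)"
  then have "Suc i < length P" by (simp add: attachments_def)
  obtain q where "path_in V E q" "set q \<inter> set P = {}" "E (P ! i) (hd q)" "E (last q) (P ! Suc i)"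
    using component_bridge[OF assms(1,3) succ] .
  then show False
    using longest_uv_path_no_insertion[OF assms(2)] \<open>Suc i < length P\<close> by blast
qed

lemma attachment_successors_nonadjacent:
  assumes "symp E" and "longest_uv_path V E u v P"
    and "i \<in> attachments E P (component (V - set P) E x)"
    and "j \<in> attachments E P (component (V - set P) E x)"
    and "i < j" and "Suc j < length P"
  shows "\<not> E (P ! Suc i) (P ! Suc j)"
proof -
  obtain q where "path_in V E q" "set q \<inter> set P = {}" "E (P ! i) (hd q)" "E (last q) (P ! j)"
    using component_bridge[OF assms(1,3,4)] .
  then show ?thesis using longest_uv_path_no_rerouting[OF assms(1,2) _ _ assms(5,6)] by blast
qed

lemma card_attachments_ge:
  assumes "graph V E" and "k_connected V E c" and "longest_uv_path V E u v P" and "u \<noteq> v"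
    and "x \<in> V - set P"
  shows "c \<le> card (attachments E P (component (V - set P) E x))"
proof -
  let ?H = "component (V - set P) E x" and ?N = "attachments E P (component (V - set P) E x)"
  have sym: "symp E" using assms(1) unfolding graph_def symp_def by blast
  have P: "path_in V E P" "hd P = u" "last P = v"
    using assms(3) unfolding longest_uv_path_def uv_path_def by auto
  then have PV: "set P \<subseteq> V" by (simp add: path_in_def)
  have "Suc 0 < length P"
    using P assms(4) by (cases P rule: list.exhaust[case_product list.exhaust]) (auto simp: path_in_def)
  \<comment> \<open>of the first two vertices of P at most one is an attachment\<close>
  then obtain j where j: "j < length P" "j \<notin> ?N"
    using attachments_not_consecutive[OF sym assms(3), of 0 x] by fastforce
  have "P ! j \<in> V - (V - set P)" using j(1) PV by auto
  moreover have "\<forall>a \<in> ?H. \<not> E a (P ! j)"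
    using j sym unfolding attachments_def by (blast dest: sympD)
  ultimately have "c \<le> card {y \<in> V - (V - set P). \<exists>a \<in> ?H. E a y}"
    by (rule k_connected_component_neighbours[OF assms(2) Diff_subset assms(5)])
  also have "\<dots> \<le> card ((!) P ` ?N)"
  proof (rule card_mono)
    show "finite ((!) P ` ?N)" unfolding attachments_def by simp
    show "{y \<in> V - (V - set P). \<exists>a \<in> ?H. E a y} \<subseteq> (!) P ` ?N"
      using sym unfolding attachments_def by (auto simp: in_set_conv_nth dest: sympD)
  qed
  also have "\<dots> \<le> card ?N" by (rule card_image_le) (simp add: attachments_def)
  finally show ?thesis .
qed

lemma longest_uv_path_independent_successors:
  assumes "graph V E" and "k_connected V E (2 * k)" and "longest_uv_path V E u v P" and "u \<noteq> v"
    and "x \<in> V - set P"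
  obtains S where "S \<subseteq> set P" "card S = k" "\<forall>s\<in>S. \<forall>s'\<in>S. \<not> E s s'"
    "\<forall>s\<in>S. \<forall>a\<in>component (V - set P) E x. \<not> E s a"
proof -
  let ?H = "component (V - set P) E x" and ?N = "attachments E P (component (V - set P) E x)"
  have sym: "symp E" and irrefl: "\<And>a. \<not> E a a" using assms(1) unfolding graph_def symp_def by blast+
  have dist: "distinct P" using assms(3) by (simp add: longest_uv_path_def uv_path_def path_in_def)
  have "2 * k \<le> card ?N" using card_attachments_ge[OF assms] .
  moreover have "finite ?N" by (simp add: attachments_def)
  ultimately have "k \<le> card (?N - {length P - 1})" by (auto simp: card_Diff_singleton_if)
  then obtain K where K: "K \<subseteq> ?N - {length P - 1}" "card K = k"
    using obtain_subset_with_card_n by blast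
  have K_succ: "i \<in> ?N" "Suc i < length P" if "i \<in> K" for i
    using that K(1) unfolding attachments_def by auto
  show thesis
  proof
    show "(\<lambda>i. P ! Suc i) ` K \<subseteq> set P" using K_succ(2) by auto
    have "inj_on (\<lambda>i. P ! Suc i) K"
    proof (rule inj_onI)
      fix i j assume "i \<in> K" "j \<in> K" "P ! Suc i = P ! Suc j"
      then show "i = j" using nth_eq_iff_index_eq[OF dist] K_succ(2) by (metis Suc_inject)
    qed
    then show "card ((\<lambda>i. P ! Suc i) ` K) = k" using K(2) by (simp add: card_image)
    have "\<not> E (P ! Suc i) (P ! Suc j)" if "i \<in> K" "j \<in> K" for i j
    proof (cases i j rule: linorder_cases)
      case less
      then show ?thesis
        using attachment_successors_nonadjacent[OF sym assms(3)] K_succ that by blast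
    next
      case equal
      then show ?thesis using irrefl by simp
    next
      case greater
      then have "\<not> E (P ! Suc j) (P ! Suc i)"
        using attachment_successors_nonadjacent[OF sym assms(3)] K_succ that by blast
      then show ?thesis using sym by (blast dest: sympD)
    qed
    then show "\<forall>s\<in>(\<lambda>i. P ! Suc i) ` K. \<forall>s'\<in>(\<lambda>i. P ! Suc i) ` K. \<not> E s s'" by blast
    have "\<not> E (P ! Suc i) a" if "i \<in> K" "a \<in> ?H" for i a
      using attachments_not_consecutive[OF sym assms(3) K_succ(1)[OF that(1)]]
        K_succ(2)[OF that(1)] that(2)
      unfolding attachments_def by blast
    then show "\<forall>s\<in>(\<lambda>i. P ! Suc i) ` K. \<forall>a\<in>?H. \<not> E s a" by blast
  qed
qed

theorem mainTheorem4:
  fixes V :: "'a set" and E :: "'a \<Rightarrow> 'a \<Rightarrow> bool" and k :: nat and u v :: 'a and P :: "'a list"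
  assumes "graph V E" and "k \<ge> 1"
    and "k_connected V E (2 * k)"
    and "P2_kP1_free V E k"
    and "u \<in> V" and "v \<in> V" and "u \<noteq> v"
    and "longest_uv_path V E u v P"
  shows "\<forall>x \<in> V - set P. \<forall>y \<in> V - set P. \<not> E x y"
proof (intro ballI notI)
  fix x y assume x: "x \<in> V - set P" and y: "y \<in> V - set P" and "E x y"
  obtain S where S: "S \<subseteq> set P" "card S = k" "\<forall>s\<in>S. \<forall>s'\<in>S. \<not> E s s'"
    "\<forall>s\<in>S. \<forall>a\<in>component (V - set P) E x. \<not> E s a"
    using longest_uv_path_independent_successors[OF assms(1,3,8,7) x] .
  have x_H: "x \<in> component (V - set P) E x" using x by (intro self_in_component)
  moreover have "y \<in> component (V - set P) E x" using component_closed[OF x_H y \<open>E x y\<close>] .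
  ultimately have "\<forall>s\<in>S. \<not> E s x \<and> \<not> E s y" using S(4) by blast
  moreover have "set P \<subseteq> V" using assms(8) by (simp add: longest_uv_path_def uv_path_def path_in_def)
  then have "S \<subseteq> V - {x, y}" using S(1) x y by blast
  ultimately show False
    using assms(4) x y \<open>E x y\<close> S(2,3) unfolding P2_kP1_free_def by blast
qed

end
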